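(* (1) If $p$ is a prime with $p\equiv1\pmod6$, then $P_p(3)$ divides $p-1$. (2) If $p$ is a prime with $p\equiv5\pmod6$, then $P_p(3)$ divides $3(p-1)$.
   Context: The Ducci function $D:\mathbb{Z}_p^3\to\mathbb{Z}_p^3$ is $D(x_1,x_2,x_3)=(x_1+x_2,\,x_2+x_3,\,x_3+x_1)$, entries mod $p$. The period $\mathrm{Per}(\mathbf{u})$ is the smallest $k\ge1$ such that $D^{l+k}(\mathbf{u})=D^l(\mathbf{u})$ for some $l\ge0$, and $P_p(3)=\mathrm{Per}(0,0,1)$. *)

theory Defs
  imports "HOL-Computational_Algebra.Primes"
begin

text \<open>Elements of Z_p^3 are represented as triples of integers reduced mod p.\<close>

definition ducci :: "int \<Rightarrow> int \<times> int \<times> int \<Rightarrow> int \<times> int \<times> int" where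
  "ducci p u = (case u of (x1, x2, x3) \<Rightarrow>
      ((x1 + x2) mod p, (x2 + x3) mod p, (x3 + x1) mod p))"

definition ducci_period :: "int \<Rightarrow> int \<times> int \<times> int \<Rightarrow> nat" where
  "ducci_period p u =
     (LEAST k. k \<ge> 1 \<and> (\<exists>l. (ducci p ^^ (l + k)) u = (ducci p ^^ l) u))"

definition P3 :: "int \<Rightarrow> nat" where
  "P3 p = ducci_period p (0, 0, 1)"

end

theory Submission
  imports Defs "HOL-Number_Theory.Number_Theory"
begin

text \<open>Over the integers the Ducci map is \<open>D = I + S\<close> with \<open>S\<close> the cyclic shift, so \<open>S\<^sup>3 = I\<close>.
  Expanding \<open>(I + S)\<^sup>6\<close> gives \<open>D\<^sup>6 = I + 21 J\<close>, where \<open>J\<close> is the all-ones matrix, and since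
  \<open>J\<^sup>2 = 3 J\<close> this yields \<open>D\<^sup>6\<^sup>m = I + c J\<close> with \<open>3 c = 2\<^sup>6\<^sup>m - 1\<close>. Hence modulo a prime
  \<open>p > 3\<close> dividing \<open>2\<^sup>6\<^sup>m - 1\<close> the map \<open>D\<^sup>6\<^sup>m\<close> is the identity, and the period of
  \<open>(0, 0, 1)\<close> divides \<open>6 m\<close>. By Fermat's little theorem we may take \<open>6 m = p - 1\<close> when
  \<open>p \<equiv> 1 (mod 6)\<close> and \<open>6 m = 3 (p - 1)\<close> when \<open>p \<equiv> 5 (mod 6)\<close>.\<close>

lemma funpow_periodic_from:
  fixes f :: "'a \<Rightarrow> 'a"
  assumes "(f ^^ (l + k)) u = (f ^^ l) u" and "l \<le> n"
  shows "(f ^^ (n + j * k)) u = (f ^^ n) u"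
proof (induction j)
  case 0
  then show ?case by simp
next
  case (Suc j)
  have split: "n + Suc j * k = (n + j * k - l) + (l + k)"
    using assms(2) by simp
  have "(f ^^ (n + Suc j * k)) u = (f ^^ (n + j * k - l)) ((f ^^ (l + k)) u)"
    by (simp only: split funpow_add[of "n + j * k - l" "l + k"] comp_apply)
  also have "\<dots> = (f ^^ (n + j * k - l + l)) u"
    by (simp only: assms(1) funpow_add[of "n + j * k - l" l] comp_apply)
  also have "\<dots> = (f ^^ n) u"
    using assms(2) Suc by simp
  finally show ?case .
qed

lemma least_eventual_period_dvd:
  fixes f :: "'a \<Rightarrow> 'a"
  assumes "k \<ge> 1" and "(f ^^ (l + k)) u = (f ^^ l) u"
  shows "(LEAST k. k \<ge> 1 \<and> (\<exists>l. (f ^^ (l + k)) u = (f ^^ l) u)) dvd k"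
proof -
  let ?is_period = "\<lambda>k. k \<ge> 1 \<and> (\<exists>l. (f ^^ (l + k)) u = (f ^^ l) u)"
  define P where "P = (LEAST k. ?is_period k)"
  have "?is_period P"
    unfolding P_def using assms by (intro LeastI[of ?is_period k]) blast
  then obtain l' where l': "(f ^^ (l' + P)) u = (f ^^ l') u" and "P \<ge> 1"
    by blast
  define L where "L = max l l'"
  define r where "r = k mod P"
  have "(f ^^ (L + r)) u = (f ^^ (L + r + k div P * P)) u"
    using funpow_periodic_from[OF l', of "L + r" "k div P"] unfolding L_def by simp
  also have "L + r + k div P * P = L + 1 * k"
    unfolding r_def by simp
  also have "(f ^^ (L + 1 * k)) u = (f ^^ L) u"
    using funpow_periodic_from[OF assms(2), of L 1] unfolding L_def by simp
  finally have "(f ^^ (L + r)) u = (f ^^ L) u" .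
  moreover have "r < P"
    unfolding r_def using \<open>P \<ge> 1\<close> by simp
  ultimately have "r = 0"
    using not_less_Least[of r ?is_period] unfolding P_def by fastforce
  then show ?thesis
    unfolding P_def r_def by auto
qed

lemma ducci_period_dvd:
  assumes "k \<ge> 1" and "(ducci p ^^ k) u = u"
  shows "ducci_period p u dvd k"
  unfolding ducci_period_def using assms by (intro least_eventual_period_dvd[where l = 0]) auto

definition ducci_int :: "int \<times> int \<times> int \<Rightarrow> int \<times> int \<times> int" where
  "ducci_int = (\<lambda>(x1, x2, x3). (x1 + x2, x2 + x3, x3 + x1))"

definition mod_triple :: "int \<Rightarrow> int \<times> int \<times> int \<Rightarrow> int \<times> int \<times> int" where
  "mod_triple p = (\<lambda>(x1, x2, x3). (x1 mod p, x2 mod p, x3 mod p))"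

lemma ducci_mod_triple: "ducci p (mod_triple p v) = mod_triple p (ducci_int v)"
  by (cases v) (simp add: ducci_def mod_triple_def ducci_int_def mod_add_eq)

lemma funpow_ducci_mod_triple: "(ducci p ^^ n) (mod_triple p v) = mod_triple p ((ducci_int ^^ n) v)"
  by (induction n) (simp_all add: ducci_mod_triple)

lemma funpow_ducci_int_six:
  "(ducci_int ^^ 6) (x, y, z) =
     (x + 21 * (x + y + z), y + 21 * (x + y + z), z + 21 * (x + y + z))"
  by (simp add: ducci_int_def numeral_eq_Suc)

lemma funpow_ducci_int_mult_six:
  "\<exists>c. 3 * c = 64 ^ m - 1 \<and>
     (ducci_int ^^ (6 * m)) (x, y, z) = (x + c * (x + y + z), y + c * (x + y + z), z + c * (x + y + z))"
proof (induction m)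
  case 0
  then show ?case by simp
next
  case (Suc m)
  then obtain c where c: "3 * c = 64 ^ m - 1"
    and iter: "(ducci_int ^^ (6 * m)) (x, y, z) = (x + c * (x + y + z), y + c * (x + y + z), z + c * (x + y + z))"
    by blast
  define c' where "c' = c + 21 * (3 * c + 1)"
  have "(ducci_int ^^ (6 * Suc m)) (x, y, z) = (ducci_int ^^ 6) ((ducci_int ^^ (6 * m)) (x, y, z))"
    by (simp only: mult_Suc_right funpow_add comp_def)
  also have "\<dots> = (x + c' * (x + y + z), y + c' * (x + y + z), z + c' * (x + y + z))"
    unfolding iter funpow_ducci_int_six c'_def by (simp add: algebra_simps)
  finally have "(ducci_int ^^ (6 * Suc m)) (x, y, z) =
      (x + c' * (x + y + z), y + c' * (x + y + z), z + c' * (x + y + z))" .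
  moreover have "3 * c' = 64 ^ Suc m - 1"
    unfolding c'_def using c by simp
  ultimately show ?case by blast
qed

lemma funpow_ducci_mult_six_mod_triple:
  fixes p :: int
  assumes "coprime p 3" and "p dvd 2 ^ (6 * m) - 1"
  shows "(ducci p ^^ (6 * m)) (mod_triple p (x, y, z)) = mod_triple p (x, y, z)"
proof -
  obtain c where c: "3 * c = 64 ^ m - 1"
    and iter: "(ducci_int ^^ (6 * m)) (x, y, z) = (x + c * (x + y + z), y + c * (x + y + z), z + c * (x + y + z))"
    using funpow_ducci_int_mult_six by blast
  have "p dvd 3 * c"
    using c assms(2) by (simp add: power_mult)
  then have "p dvd c"
    using assms(1) coprime_dvd_mult_right_iff by blast
  then have "(w + c * s) mod p = w mod p" for w s
    by (simp add: mod_add_right_eq[symmetric])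
  then show ?thesis
    unfolding funpow_ducci_mod_triple iter by (simp add: mod_triple_def)
qed

lemma fermat_theorem_int:
  fixes p a :: int
  assumes "prime p" and "coprime a p"
  shows "[a ^ nat (p - 1) = 1] (mod p)"
proof -
  have "p > 1"
    using assms(1) prime_gt_1_int by blast
  then have "[a ^ totient (nat p) = 1] (mod p)"
    using assms(2) by (intro residues.euler_theorem) (simp_all add: residues_def)
  then show ?thesis
    using assms(1) \<open>p > 1\<close> by (simp add: totient_prime prime_nat_iff_prime nat_diff_distrib')
qed

lemma P3_dvd_common_multiple:
  fixes p n :: int
  assumes "prime p" and "p > 3" and "p - 1 dvd n" and "6 dvd n" and "n > 0"
  shows "int (P3 p) dvd n"
proof -
  obtain k where "n = 6 * k"
    using assms(4) by blast
  then have n_six: "nat n = 6 * nat k"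
    using assms(5) by (simp add: nat_mult_distrib)
  obtain k' where "n = (p - 1) * k'"
    using assms(3) by blast
  then have n_pred: "nat n = nat (p - 1) * nat k'"
    using assms(2,5) by (simp add: nat_mult_distrib zero_less_mult_iff)
  have "coprime 2 p" "coprime p 3"
    using assms(1,2) by (auto intro: primes_coprime simp del: coprime_left_2_iff_odd)
  then have "[2 ^ nat n = 1] (mod p)"
    unfolding n_pred using fermat_theorem_int[OF assms(1)] by (metis cong_pow power_mult power_one)
  then have "p dvd 2 ^ (6 * nat k) - 1"
    unfolding n_six by (simp add: cong_iff_dvd_diff)
  moreover have "mod_triple p (0, 0, 1) = (0, 0, 1)"
    using assms(2) by (simp add: mod_triple_def)
  ultimately have "(ducci p ^^ nat n) (0, 0, 1) = (0, 0, 1)"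
    unfolding n_six using funpow_ducci_mult_six_mod_triple[OF \<open>coprime p 3\<close>] by metis
  then have "P3 p dvd nat n"
    unfolding P3_def using assms(5) by (intro ducci_period_dvd) simp_all
  then show ?thesis
    using assms(5) int_dvd_int_iff[of "P3 p" "nat n"] by simp
qed

theorem theorem4p4:
  fixes p :: int
  assumes "prime p"
  shows "(p mod 6 = 1 \<longrightarrow> int (P3 p) dvd p - 1)
       \<and> (p mod 6 = 5 \<longrightarrow> int (P3 p) dvd 3 * (p - 1))"
proof (intro conjI impI)
  have "p > 1"
    using assms prime_gt_1_int by blast
  show "int (P3 p) dvd p - 1" if "p mod 6 = 1"
  proof (rule P3_dvd_common_multiple[OF assms _ dvd_refl])
    show "p > 3" "6 dvd p - 1" "p - 1 > 0"
      using that \<open>p > 1\<close> by presburger+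
  qed
  show "int (P3 p) dvd 3 * (p - 1)" if "p mod 6 = 5"
  proof (rule P3_dvd_common_multiple[OF assms _ dvd_triv_right])
    show "p > 3" "6 dvd 3 * (p - 1)" "3 * (p - 1) > 0"
      using that \<open>p > 1\<close> by presburger+
  qed
qed

end
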